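(* Every indecomposable tournament with at least $5$ vertices having at most one non-critical vertex has an odd number of vertices.
   Context: A tournament $T=(V,A)$: finite vertex set, and for all distinct $x,y$ exactly one of $(x,y),(y,x)$ is an arc; write $x\to y$ for $(x,y)\in A$. $T-x=T[V\setminus\{x\}]$ is the induced subtournament. An interval of $T$ is $I\subseteq V$ such that for every $x\in V\setminus I$, either $x\to a$ for all $a\in I$ or $a\to x$ for all $a\in I$; trivial intervals are $\varnothing$, $V$, singletons; $T$ (with $\geqslant 3$ vertices) is indecomposable if all its intervals are trivial, decomposable otherwise. A vertex $x$ of an indecomposable tournament $T$ is critical if $T-x$ is decomposable, and non-critical otherwise. *)

theory Defs
  imports Main
begin

definition tournament :: "'a set \<Rightarrow> ('a \<times> 'a) set \<Rightarrow> bool" where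
  "tournament V A \<longleftrightarrow> finite V \<and> A \<subseteq> V \<times> V \<and>
     (\<forall>x\<in>V. (x, x) \<notin> A) \<and>
     (\<forall>x\<in>V. \<forall>y\<in>V. x \<noteq> y \<longrightarrow> ((x, y) \<in> A \<longleftrightarrow> (y, x) \<notin> A))"

definition induced_arcs :: "('a \<times> 'a) set \<Rightarrow> 'a set \<Rightarrow> ('a \<times> 'a) set" where
  "induced_arcs A W = A \<inter> (W \<times> W)"

definition is_interval :: "'a set \<Rightarrow> ('a \<times> 'a) set \<Rightarrow> 'a set \<Rightarrow> bool" where
  "is_interval V A I \<longleftrightarrow> I \<subseteq> V \<and>
     (\<forall>x\<in>V - I. (\<forall>a\<in>I. (x, a) \<in> A) \<or> (\<forall>a\<in>I. (a, x) \<in> A))"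

definition trivial_interval :: "'a set \<Rightarrow> 'a set \<Rightarrow> bool" where
  "trivial_interval V I \<longleftrightarrow> I = {} \<or> I = V \<or> (\<exists>v. I = {v})"

definition indecomposable :: "'a set \<Rightarrow> ('a \<times> 'a) set \<Rightarrow> bool" where
  "indecomposable V A \<longleftrightarrow> card V \<ge> 3 \<and>
     (\<forall>I. is_interval V A I \<longrightarrow> trivial_interval V I)"

definition decomposable :: "'a set \<Rightarrow> ('a \<times> 'a) set \<Rightarrow> bool" where
  "decomposable V A \<longleftrightarrow> card V \<ge> 3 \<and> \<not> indecomposable V A"

definition critical :: "'a set \<Rightarrow> ('a \<times> 'a) set \<Rightarrow> 'a \<Rightarrow> bool" where
  "critical V A x \<longleftrightarrow> x \<in> V \<and> decomposable (V - {x}) (induced_arcs A (V - {x}))"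

definition non_critical :: "'a set \<Rightarrow> ('a \<times> 'a) set \<Rightarrow> 'a \<Rightarrow> bool" where
  "non_critical V A x \<longleftrightarrow> x \<in> V \<and> \<not> decomposable (V - {x}) (induced_arcs A (V - {x}))"

end

theory Submission
  imports Defs
begin

(* By a theorem of Ehrenfeucht and Rozenberg, an indecomposable subtournament X of an
   indecomposable tournament T with at least two vertices outside X extends to an
   indecomposable X + {y, z}.  Assuming the contrary, one shows in turn that no vertex
   outside X is uniform on X, that none is a twin of a vertex of X, and then that the
   complement of X is a nontrivial interval of T.
   Every vertex w of T lies on a 3-cycle, which is indecomposable.  Adding two vertices
   at a time, when T has even order one arrives at an indecomposable T - v with v <> w.
   Applying this to w and then to v gives two distinct non-critical vertices. *)

lemma two_le_cardE:
  assumes "2 \<le> card S"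
  obtains a b where "a \<in> S" "b \<in> S" "a \<noteq> b"
proof -
  have "finite S" using assms card.infinite by force
  moreover have "\<not> card S \<le> Suc 0" using assms by simp
  ultimately show thesis using that card_le_Suc0_iff_eq by blast
qed

definition uniform :: "('a \<times> 'a) set \<Rightarrow> 'a \<Rightarrow> 'a set \<Rightarrow> bool" where
  "uniform A v S \<longleftrightarrow> (\<forall>a\<in>S. (v, a) \<in> A) \<or> (\<forall>a\<in>S. (a, v) \<in> A)"

definition interval_on :: "('a \<times> 'a) set \<Rightarrow> 'a set \<Rightarrow> 'a set \<Rightarrow> bool" where
  "interval_on A W I \<longleftrightarrow> I \<subseteq> W \<and> (\<forall>x\<in>W - I. uniform A x I)"

definition indec_on :: "('a \<times> 'a) set \<Rightarrow> 'a set \<Rightarrow> bool" where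
  "indec_on A W \<longleftrightarrow> card W \<ge> 3 \<and> (\<forall>I. interval_on A W I \<longrightarrow> trivial_interval W I)"

(* For y outside X this says that y lies in Ehrenfeucht and Rozenberg's class X(t):
   {t, y} is an interval of X + {y}. *)
definition twin :: "('a \<times> 'a) set \<Rightarrow> 'a set \<Rightarrow> 'a \<Rightarrow> 'a \<Rightarrow> bool" where
  "twin A X t y \<longleftrightarrow> t \<in> X \<and> (\<forall>s\<in>X - {t}. uniform A s {t, y})"

lemma is_interval_induced_iff: "is_interval W (induced_arcs A W) I \<longleftrightarrow> interval_on A W I"
  unfolding is_interval_def interval_on_def induced_arcs_def uniform_def by blast

lemma indecomposable_induced_iff: "indecomposable W (induced_arcs A W) \<longleftrightarrow> indec_on A W"
  unfolding indecomposable_def indec_on_def is_interval_induced_iff ..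

lemma uniform_subset: "uniform A v S \<Longrightarrow> T \<subseteq> S \<Longrightarrow> uniform A v T"
  unfolding uniform_def by blast

lemma interval_on_uniform: "interval_on A W I \<Longrightarrow> x \<in> W \<Longrightarrow> x \<notin> I \<Longrightarrow> S \<subseteq> I \<Longrightarrow> uniform A x S"
  unfolding interval_on_def by (meson DiffI uniform_subset)

lemma indec_on_card: "indec_on A W \<Longrightarrow> card W \<ge> 3"
  unfolding indec_on_def by blast

lemma indec_on_finite: "indec_on A W \<Longrightarrow> finite W"
  using indec_on_card card.infinite by fastforce

lemma indec_on_interval_trivial:
  "indec_on A W \<Longrightarrow> interval_on A W I \<Longrightarrow> I = {} \<or> I = W \<or> (\<exists>v. I = {v})"
  unfolding indec_on_def trivial_interval_def by blast

lemma indec_on_no_proper_interval: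
  assumes "indec_on A W" "interval_on A W I" "a \<in> I" "b \<in> I" "a \<noteq> b" "c \<in> W" "c \<notin> I"
  shows False
  using indec_on_interval_trivial[OF assms(1,2)] assms(3-7) by auto

lemma indec_on_not_uniform_rest:
  assumes W: "indec_on A W" and w: "w \<in> W"
  shows "\<not> uniform A w (W - {w})"
proof
  assume "uniform A w (W - {w})"
  then have I: "interval_on A W (W - {w})"
    unfolding interval_on_def using w by auto
  have "2 \<le> card (W - {w})"
    using indec_on_card[OF W] indec_on_finite[OF W] w by simp
  then obtain a b where "a \<in> W - {w}" "b \<in> W - {w}" "a \<noteq> b"
    by (rule two_le_cardE)
  then show False
    using indec_on_no_proper_interval[OF W I _ _ _ w] by blast
qed

lemma twinI:
  assumes "t \<in> X" "\<And>s. s \<in> X - {t} \<Longrightarrow> uniform A s J" "t \<in> J" "y \<in> J"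
  shows "twin A X t y"
  unfolding twin_def using assms uniform_subset[of A _ J "{t, y}"] by blast

lemma indec_on_pair_cases:
  assumes X: "indec_on A X"
    and decomp: "\<not> indec_on A (X \<union> {y, z})"
  obtains (pair_uniform) "\<forall>t\<in>X. uniform A t {y, z}"
    | (twin_y) t where "twin A X t y" "uniform A z {t, y}"
    | (twin_z) t where "twin A X t z" "uniform A y {t, z}"
    | (twin_both) t where "twin A X t y" "twin A X t z"
    | (both_uniform) "uniform A y X" "uniform A z X"
    | (z_uniform) "uniform A z (insert y X)"
    | (y_uniform) "uniform A y (insert z X)"
proof -
  let ?W = "X \<union> {y, z}"
  have "card X \<le> card ?W"
    using indec_on_finite[OF X] by (intro card_mono) auto
  then have "card ?W \<ge> 3" using indec_on_card[OF X] by linarith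
  then obtain J where J: "interval_on A ?W J" "\<not> trivial_interval ?W J"
    using decomp unfolding indec_on_def by blast
  then have J_sub: "J \<subseteq> ?W" and J_nontrivial: "J \<noteq> {}" "J \<noteq> ?W" "\<And>v. J \<noteq> {v}"
    unfolding interval_on_def trivial_interval_def by auto
  note J_uniform = interval_on_uniform[OF J(1)]
  have "interval_on A X (J \<inter> X)"
    unfolding interval_on_def using J_uniform by blast
  then consider "J \<inter> X = {}" | t where "J \<inter> X = {t}" | "X \<subseteq> J"
    using indec_on_interval_trivial[OF X] by blast
  then show thesis
  proof cases
    case 1
    have "J \<subseteq> {y, z}" using J_sub 1 by blast
    then have "J = {y, z}"
      using J_nontrivial(1) J_nontrivial(3)[of y] J_nontrivial(3)[of z] by blast
    then have "uniform A t {y, z}" if "t \<in> X" for t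
      using J_uniform[of t "{y, z}"] that 1 by blast
    then show thesis by (rule pair_uniform[rule_format])
  next
    case (2 t)
    then have t: "t \<in> X" "t \<in> J" by auto
    have out: "\<And>s. s \<in> X - {t} \<Longrightarrow> uniform A s J"
      using J_uniform 2 by blast
    have "J \<noteq> {t}" by (rule J_nontrivial(3))
    then consider "y \<in> J" "z \<in> J" | "y \<in> J" "z \<notin> J" | "y \<notin> J" "z \<in> J"
      using J_sub 2 by blast
    then show thesis
    proof cases
      case 1
      then show thesis using twin_both twinI[OF t(1) out t(2)] by blast
    next
      case 2
      then show thesis using twin_y[OF twinI[OF t(1) out t(2) 2(1)]] J_uniform[of z "{t, y}"] t by simp
    next
      case 3
      then show thesis using twin_z[OF twinI[OF t(1) out t(2) 3(2)]] J_uniform[of y "{t, z}"] t by simp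
    qed
  next
    case 3
    consider "y \<in> J" "z \<notin> J" | "y \<notin> J" "z \<in> J" | "y \<notin> J" "z \<notin> J"
      using J_nontrivial(2) J_sub 3 by blast
    then show thesis
    proof cases
      case 1
      then show thesis using z_uniform J_uniform[of z "insert y X"] 3 by simp
    next
      case 2
      then show thesis using y_uniform J_uniform[of y "insert z X"] 3 by simp
    next
      case 3
      then show thesis using both_uniform J_uniform[of y X] J_uniform[of z X] \<open>X \<subseteq> J\<close> by simp
    qed
  qed
qed

locale tournament_graph =
  fixes V :: "'a set" and A :: "('a \<times> 'a) set"
  assumes tournament: "tournament V A"
begin

lemma finite_V: "finite V"
  using tournament unfolding tournament_def by blast

lemma arc_in_V: "(a, b) \<in> A \<Longrightarrow> a \<in> V \<and> b \<in> V"
  using tournament unfolding tournament_def by blast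

lemma arc_asym: "(a, b) \<in> A \<Longrightarrow> (b, a) \<notin> A"
  using tournament arc_in_V unfolding tournament_def by metis

lemma arc_total: "a \<in> V \<Longrightarrow> b \<in> V \<Longrightarrow> a \<noteq> b \<Longrightarrow> (a, b) \<in> A \<or> (b, a) \<in> A"
  using tournament unfolding tournament_def by blast

lemma uniform_singleton: "a \<in> V \<Longrightarrow> b \<in> V \<Longrightarrow> a \<noteq> b \<Longrightarrow> uniform A a {b}"
  using arc_total unfolding uniform_def by auto

lemma uniform_pair_trans: "uniform A s {a, b} \<Longrightarrow> uniform A s {b, c} \<Longrightarrow> uniform A s {a, c}"
  unfolding uniform_def using arc_asym by blast

lemma uniform_UnI:
  assumes "uniform A v S" "a \<in> S" "\<And>w. w \<in> U \<Longrightarrow> uniform A v (insert w S)"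
  shows "uniform A v (S \<union> U)"
  using assms arc_asym unfolding uniform_def by (metis UnE insertCI)

lemma uniform_of_uniform_pairs:
  "uniform A x X \<Longrightarrow> \<forall>t\<in>X. uniform A t {x, w} \<Longrightarrow> uniform A w X"
  unfolding uniform_def using arc_asym by blast

lemma uniform_insert_of_pair:
  "uniform A x X \<Longrightarrow> t \<in> X \<Longrightarrow> uniform A x {t, w} \<Longrightarrow> uniform A x (insert w X)"
  unfolding uniform_def using arc_asym by blast

lemma uniform_pair_exchange:
  assumes "u \<in> V" "t \<in> V" "u \<noteq> t"
    and "uniform A u {t, w}" "uniform A t {u, z}" "uniform A z {t, w}"
  shows "uniform A w {u, z}"
  using assms arc_total[of u t] arc_asym unfolding uniform_def by blast

lemma uniform_twin_uniform_rest:
  "uniform A y X \<Longrightarrow> twin A X t y \<Longrightarrow> uniform A t (X - {t})"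
  unfolding uniform_def twin_def using arc_asym by blast

lemma indec_on_uniform_not_twin:
  "indec_on A X \<Longrightarrow> uniform A y X \<Longrightarrow> \<not> twin A X t y"
  using uniform_twin_uniform_rest indec_on_not_uniform_rest twin_def by metis

lemma twin_unique:
  assumes X: "indec_on A X" and twins: "twin A X t y" "twin A X t' y"
  shows "t = t'"
proof (rule ccontr)
  assume ne: "t \<noteq> t'"
  have "t \<in> X" "t' \<in> X" using twins unfolding twin_def by auto
  moreover have "uniform A s {t, t'}" if "s \<in> X - {t, t'}" for s
    using that twins uniform_pair_trans[of s t y t'] unfolding twin_def
    by (simp add: insert_commute)
  then have "interval_on A X {t, t'}"
    unfolding interval_on_def using calculation by blast
  moreover obtain c where "c \<in> X" "c \<notin> {t, t'}"
  proof -
    have "\<not> X \<subseteq> {t, t'}"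
      using indec_on_card[OF X] card_mono[of "{t, t'}" X] ne by auto
    then show thesis using that by blast
  qed
  ultimately show False using indec_on_no_proper_interval[OF X] ne by blast
qed

lemma three_cycle_indec_on:
  assumes arcs: "(a, b) \<in> A" "(b, c) \<in> A" "(c, a) \<in> A"
  shows "indec_on A {a, b, c}"
proof -
  have distinct: "a \<noteq> b" "b \<noteq> c" "c \<noteq> a" and not_arcs: "(b, a) \<notin> A" "(c, b) \<notin> A" "(a, c) \<notin> A"
    using arcs arc_asym by blast+
  have "trivial_interval {a, b, c} I" if "interval_on A {a, b, c} I" for I
  proof -
    have "I \<in> Pow {a, b, c}" "\<forall>x\<in>{a, b, c} - I. uniform A x I"
      using that unfolding interval_on_def by auto
    then show ?thesis
      using arcs not_arcs distinct unfolding trivial_interval_def uniform_def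
      by (auto simp: Pow_insert)
  qed
  moreover have "card {a, b, c} = 3" using distinct by simp
  ultimately show ?thesis unfolding indec_on_def by simp
qed

lemma indec_on_three_cycle_through:
  assumes V: "indec_on A V" and w: "w \<in> V"
  obtains b c where "(w, b) \<in> A" "(b, c) \<in> A" "(c, w) \<in> A"
proof -
  have "\<exists>b c. (w, b) \<in> A \<and> (b, c) \<in> A \<and> (c, w) \<in> A"
  proof (rule ccontr)
    assume no_cycle: "\<not> ?thesis"
    obtain b c where b: "b \<in> V" "(w, b) \<in> A" and c: "c \<in> V" "(c, w) \<in> A"
      using indec_on_not_uniform_rest[OF V w] arc_total w unfolding uniform_def by blast
    define Out where "Out = {x \<in> V. (w, x) \<in> A}"
    have "uniform A x (V - Out)" if "x \<in> Out" for x
    proof -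
      have "(y, x) \<in> A" if "y \<in> V - Out" for y
        using \<open>x \<in> Out\<close> that no_cycle arc_total[of x y] arc_total[of y w] w
        unfolding Out_def by auto
      then show ?thesis unfolding uniform_def by blast
    qed
    then have "interval_on A V (V - Out)"
      unfolding interval_on_def by blast
    moreover have "w \<in> V - Out" "c \<in> V - Out" "w \<noteq> c" "b \<notin> V - Out"
      using w b c arc_asym unfolding Out_def by auto
    ultimately show False
      using indec_on_no_proper_interval[OF V] b by blast
  qed
  then show thesis using that by blast
qed

end

(* The configuration refuted in the proof of Ehrenfeucht and Rozenberg's theorem. *)
locale pair_extension_free = tournament_graph +
  fixes X :: "'a set"
  assumes indec_V: "indec_on A V" and indec_X: "indec_on A X" and X_subset: "X \<subseteq> V"
    and no_pair_extension:
      "\<lbrakk>y \<in> V - X; z \<in> V - X; y \<noteq> z\<rbrakk> \<Longrightarrow> \<not> indec_on A (X \<union> {y, z})"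
begin

lemma uniform_outside_insert:
  assumes x: "x \<in> V - X" "uniform A x X" and w: "w \<in> V - X" "\<not> uniform A w X"
  shows "uniform A x (insert w X)"
proof -
  have "x \<noteq> w" using x w by blast
  from indec_X no_pair_extension[OF x(1) w(1) this] show ?thesis
  proof (cases rule: indec_on_pair_cases)
    case pair_uniform
    then show ?thesis using uniform_of_uniform_pairs x w by blast
  next
    case (twin_z t)
    then show ?thesis using uniform_insert_of_pair x unfolding twin_def by blast
  next
    case (twin_y t)
    then show ?thesis using indec_on_uniform_not_twin[OF indec_X x(2)] by blast
  next
    case (twin_both t)
    then show ?thesis using indec_on_uniform_not_twin[OF indec_X x(2)] by blast
  next
    case both_uniform
    then show ?thesis using w by blast
  next
    case z_uniform
    then show ?thesis using w uniform_subset[OF z_uniform subset_insertI] by blast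
  next
    case y_uniform
    then show ?thesis .
  qed
qed

lemma two_in_XE:
  obtains a a' where "a \<in> X" "a' \<in> X" "a \<noteq> a'"
proof -
  have "2 \<le> card X" using indec_on_card[OF indec_X] by simp
  then show thesis using that two_le_cardE by blast
qed

lemma outside_not_uniform:
  assumes b: "b \<in> V - X"
  shows "\<not> uniform A b X"
proof
  assume "uniform A b X"
  define U where "U = {x \<in> V - X. uniform A x X}"
  obtain a a' where a: "a \<in> X" "a' \<in> X" "a \<noteq> a'" by (rule two_in_XE)
  have "uniform A x (V - U)" if x: "x \<in> U" for x
  proof -
    have "uniform A x (insert w X)" if "w \<in> (V - U) - X" for w
      using uniform_outside_insert x that unfolding U_def by blast
    then have "uniform A x (X \<union> ((V - U) - X))"
      using uniform_UnI[of x X a "(V - U) - X"] x a(1) unfolding U_def by blast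
    moreover have "X \<union> ((V - U) - X) = V - U" using X_subset unfolding U_def by blast
    ultimately show ?thesis by simp
  qed
  then have "interval_on A V (V - U)" unfolding interval_on_def by blast
  moreover have "a \<in> V - U" "a' \<in> V - U" "b \<in> V" "b \<notin> V - U"
    using a X_subset b \<open>uniform A b X\<close> unfolding U_def by auto
  ultimately show False
    using indec_on_no_proper_interval[OF indec_V _ _ _ a(3)] by blast
qed

lemma twin_class_uniform:
  assumes z: "z \<in> V - X" "twin A X u z" and w: "w \<in> V - X" "\<not> twin A X u w"
  shows "uniform A w {u, z}"
proof -
  have "z \<noteq> w" using z w by blast
  from indec_X no_pair_extension[OF z(1) w(1) this] show ?thesis
  proof (cases rule: indec_on_pair_cases)
    case pair_uniform
    have "uniform A s {u, w}" if "s \<in> X - {u}" for s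
      using uniform_pair_trans[of s u z w] z(2) pair_uniform that unfolding twin_def by blast
    then have "twin A X u w"
      using z(2) unfolding twin_def by blast
    then show ?thesis using w by blast
  next
    case (twin_y t)
    then show ?thesis using twin_unique[OF indec_X z(2) twin_y(1)] by simp
  next
    case (twin_z t)
    then have t: "t \<in> X" "t \<noteq> u" using w unfolding twin_def by auto
    have u: "u \<in> X" using z(2) unfolding twin_def by blast
    have "uniform A u {t, w}" using twin_z t u unfolding twin_def by blast
    moreover have "uniform A t {u, z}" using z(2) t unfolding twin_def by blast
    ultimately show ?thesis
      using uniform_pair_exchange[of u t w z] twin_z(2) t u X_subset by blast
  next
    case (twin_both t)
    then show ?thesis using twin_unique[OF indec_X z(2) twin_both(1)] w by simp
  next
    case both_uniform
    then show ?thesis using outside_not_uniform z(1) by blast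
  next
    case z_uniform
    then show ?thesis using outside_not_uniform[OF w(1)] uniform_subset[OF z_uniform subset_insertI] by blast
  next
    case y_uniform
    then show ?thesis using outside_not_uniform[OF z(1)] uniform_subset[OF y_uniform subset_insertI] by blast
  qed
qed

lemma outside_not_twin:
  assumes y: "y \<in> V - X"
  shows "\<not> twin A X u y"
proof
  assume "twin A X u y"
  then have u: "u \<in> X" unfolding twin_def by blast
  define P where "P = insert u {z \<in> V - X. twin A X u z}"
  have "uniform A w P" if w: "w \<in> V - P" for w
  proof -
    have "uniform A w (insert z {u})" if z: "z \<in> {z \<in> V - X. twin A X u z}" for z
    proof (cases "w \<in> X")
      case True
      then show ?thesis using z w unfolding P_def twin_def by (auto simp: insert_commute)
    next
      case False
      then have "uniform A w {u, z}"
        using twin_class_uniform z w unfolding P_def by blast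
      then show ?thesis by (simp add: insert_commute)
    qed
    moreover have "uniform A w {u}"
      using uniform_singleton w u X_subset unfolding P_def by auto
    ultimately have "uniform A w ({u} \<union> {z \<in> V - X. twin A X u z})"
      using uniform_UnI[of w "{u}" u] by blast
    then show ?thesis unfolding P_def by simp
  qed
  then have "interval_on A V P"
    using u X_subset unfolding interval_on_def P_def by auto
  moreover obtain s where s: "s \<in> X" "s \<noteq> u" using two_in_XE by metis
  then have "u \<in> P" "y \<in> P" "u \<noteq> y" "s \<in> V" "s \<notin> P"
    using y u \<open>twin A X u y\<close> X_subset unfolding P_def by auto
  ultimately show False
    by (rule indec_on_no_proper_interval[OF indec_V])
qed

lemma outside_pair_uniform:
  assumes t: "t \<in> X" and yz: "y \<in> V - X" "z \<in> V - X" "y \<noteq> z"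
  shows "uniform A t {y, z}"
  using indec_X no_pair_extension[OF yz]
proof (cases rule: indec_on_pair_cases)
  case pair_uniform
  then show ?thesis using t by blast
next
  case (twin_y t')
  then show ?thesis using outside_not_twin[OF yz(1)] by blast
next
  case (twin_z t')
  then show ?thesis using outside_not_twin[OF yz(2)] by blast
next
  case (twin_both t')
  then show ?thesis using outside_not_twin[OF yz(1)] by blast
next
  case both_uniform
  then show ?thesis using outside_not_uniform[OF yz(1)] by blast
next
  case z_uniform
  then show ?thesis using outside_not_uniform[OF yz(2)] uniform_subset[OF z_uniform subset_insertI] by blast
next
  case y_uniform
  then show ?thesis using outside_not_uniform[OF yz(1)] uniform_subset[OF y_uniform subset_insertI] by blast
qed

lemma card_outside_le_1: "card (V - X) \<le> 1"
proof (rule ccontr)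
  assume "\<not> card (V - X) \<le> 1"
  then have "2 \<le> card (V - X)" by simp
  then obtain y y' where y: "y \<in> V - X" "y' \<in> V - X" "y \<noteq> y'"
    by (rule two_le_cardE)
  have "uniform A t (V - X)" if t: "t \<in> X" for t
  proof -
    have ty: "uniform A t {y}" using uniform_singleton t X_subset y(1) by auto
    have "uniform A t (insert z {y})" if z: "z \<in> V - X" for z
    proof (cases "z = y")
      case True
      then show ?thesis using ty by simp
    next
      case False
      then show ?thesis using outside_pair_uniform[OF t y(1) z] by (simp add: insert_commute)
    qed
    then have "uniform A t ({y} \<union> (V - X))" by (rule uniform_UnI[OF ty singletonI])
    then show ?thesis using y(1) by (simp add: insert_absorb)
  qed
  then have "interval_on A V (V - X)" unfolding interval_on_def by blast
  moreover obtain a where "a \<in> X" using two_in_XE by metis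
  ultimately show False
    using indec_on_no_proper_interval[OF indec_V _ y, of a] X_subset by blast
qed

end

context tournament_graph
begin

lemma indec_on_extend_by_pair:
  assumes "indec_on A V" "indec_on A X" "X \<subseteq> V" "2 \<le> card (V - X)"
  obtains y z where "y \<in> V - X" "z \<in> V - X" "y \<noteq> z" "indec_on A (X \<union> {y, z})"
proof (rule ccontr)
  assume "\<not> thesis"
  then interpret pair_extension_free V A X
    using assms(1-3) that by unfold_locales blast+
  show False using card_outside_le_1 assms(4) by simp
qed

lemma indec_on_delete_vertex_outside:
  assumes V: "indec_on A V" and "indec_on A X" "X \<subseteq> V" "odd (card (V - X))"
  shows "\<exists>v\<in>V - X. indec_on A (V - {v})"
  using assms(2-4)
proof (induction "card (V - X)" arbitrary: X rule: less_induct)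
  case less
  show ?case
  proof (cases "card (V - X) = 1")
    case True
    then obtain v where v: "V - X = {v}" by (rule card_1_singletonE)
    then have "V - {v} = X" using less.prems(2) by blast
    then show ?thesis using v less.prems(1) by blast
  next
    case False
    then have "2 \<le> card (V - X)" using less.prems(3) by presburger
    then obtain y z where yz: "y \<in> V - X" "z \<in> V - X" "y \<noteq> z" "indec_on A (X \<union> {y, z})"
      using indec_on_extend_by_pair[OF V less.prems(1,2)] by blast
    have "V - (X \<union> {y, z}) = (V - X) - {y} - {z}" by blast
    then have "card (V - (X \<union> {y, z})) = card (V - X) - 2"
      using yz finite_V by simp
    then have "\<exists>v\<in>V - (X \<union> {y, z}). indec_on A (V - {v})"
      using less.hyps[OF _ yz(4)] less.prems(2,3) yz(1,2) \<open>2 \<le> card (V - X)\<close> by simp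
    then show ?thesis by blast
  qed
qed

lemma even_indec_on_delete_vertex_other:
  assumes V: "indec_on A V" and ev: "even (card V)" and w: "w \<in> V"
  obtains v where "v \<in> V" "v \<noteq> w" "indec_on A (V - {v})"
proof -
  obtain b c where cycle: "(w, b) \<in> A" "(b, c) \<in> A" "(c, w) \<in> A"
    using indec_on_three_cycle_through[OF V w] .
  let ?X = "{w, b, c}"
  have X: "indec_on A ?X" using three_cycle_indec_on[OF cycle] .
  have sub: "?X \<subseteq> V" using cycle arc_in_V by blast
  have "card (V - ?X) = card V - card ?X"
    using sub finite_V by (simp add: card_Diff_subset finite_subset)
  moreover have "w \<noteq> b" "b \<noteq> c" "c \<noteq> w" using cycle arc_asym by blast+
  then have "card ?X = 3" by simp
  moreover have "card ?X \<le> card V" using sub finite_V by (rule card_mono[rotated])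
  ultimately have "odd (card (V - ?X))" using ev by presburger
  then show thesis
    using indec_on_delete_vertex_outside[OF V X sub] that by blast
qed

end

theorem mainTheorem9:
  fixes V :: "'a set" and A :: "('a \<times> 'a) set"
  assumes "tournament V A"
    and "indecomposable V A"
    and "card V \<ge> 5"
    and "card {x \<in> V. non_critical V A x} \<le> 1"
  shows "odd (card V)"
proof (rule ccontr)
  assume ev: "\<not> odd (card V)"
  interpret tournament_graph V A by (rule tournament_graph.intro) fact
  have "induced_arcs A V = A"
    using assms(1) unfolding tournament_def induced_arcs_def by blast
  then have V: "indec_on A V" using assms(2) indecomposable_induced_iff[of V A] by simp
  have non_critical: "non_critical V A v" if "v \<in> V" "indec_on A (V - {v})" for v
    using that indecomposable_induced_iff unfolding non_critical_def decomposable_def by blast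
  obtain w where "w \<in> V" using assms(3) by fastforce
  obtain v1 where v1: "v1 \<in> V" "indec_on A (V - {v1})"
    using even_indec_on_delete_vertex_other[OF V _ \<open>w \<in> V\<close>] ev by blast
  obtain v2 where v2: "v2 \<in> V" "v2 \<noteq> v1" "indec_on A (V - {v2})"
    using even_indec_on_delete_vertex_other[OF V _ v1(1)] ev by blast
  have "{v1, v2} \<subseteq> {x \<in> V. non_critical V A x}" using non_critical v1 v2 by blast
  then have "card {v1, v2} \<le> card {x \<in> V. non_critical V A x}"
    using finite_V by (intro card_mono) auto
  then show False using v2(2) assms(4) by simp
qed

end
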